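(* Let $X$ and $Y$ be arbitrary (completely regular) spaces and $F\colon\mathcal{K}(X)\to\mathcal{K}(Y)$ a map satisfying: (1) if $K,L\in\mathcal{K}(X)$ and $K\subset L$, then $F(K)\subset F(L)$; $(2)_c$ for each countable $L\in\mathcal{K}(Y)$ there is $K\in\mathcal{K}(X)$ with $L\subset F(K)$; $(3)_c$ if $U\subset X$ and $V\subset Y$ are non-empty open sets such that for each countable compact $L\subset V$ there is a compact $K\subset U$ with $L\subset F(K)$, then for any open cover $\mathcal{W}$ of $U$ and any $y\in V$ there exist a finite $\mathcal{E}\subset\mathcal{W}$ and a neighborhood $V_y$ of $y$ such that every countable compact $L\subset V_y$ satisfies $L\subset F(K)$ for some compact $K\subset\bigcup\mathcal{E}$. Then $F$ is monotone set tri-quotient.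
   Context: $\mathcal{K}(X)$ is the set of compact subsets of $X$, $\mathcal{T}(X)$ the topology of $X$. $F\colon\mathcal{K}(X)\to 2^Y$ is monotone if $K\subset L$ implies $F(K)\subset F(L)$; it is set tri-quotient if there is $s\colon\mathcal{T}(X)\to\mathcal{T}(Y)$ with: (str1) $s(U)\subset\bigcup\{F(K):K\in\mathcal{K}(X),K\subset U\}$; (str2) $s(X)=Y$; (str3) $U\subset V\Rightarrow s(U)\subset s(V)$; (str4) if $y\in s(U)$ and $\mathcal{W}$ is a cover of $\bigcup\{K\in F^{-1}(y):K\subset U\}$ by open subsets of $X$, then $y\in s(\bigcup\mathcal{E})$ for some finite $\mathcal{E}\subset\mathcal{W}$, where $F^{-1}(y)=\{K\in\mathcal{K}(X):y\in F(K)\}$. *)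

theory Defs
  imports "HOL-Analysis.Analysis"
begin

text \<open>A map F defined on the compact subsets of X (values outside K(X) are irrelevant).\<close>

definition monotone_cpt :: "'a topology \<Rightarrow> ('a set \<Rightarrow> 'b set) \<Rightarrow> bool" where
  "monotone_cpt X F \<longleftrightarrow>
     (\<forall>K L. compactin X K \<and> compactin X L \<and> K \<subseteq> L \<longrightarrow> F K \<subseteq> F L)"

text \<open>Set tri-quotient: s is only relevant on open sets of X (s : T(X) -> T(Y)).\<close>

definition set_tri_quotient ::
  "'a topology \<Rightarrow> 'b topology \<Rightarrow> ('a set \<Rightarrow> 'b set) \<Rightarrow> bool" where
  "set_tri_quotient X Y F \<longleftrightarrow>
     (\<exists>s :: 'a set \<Rightarrow> 'b set.
        (\<forall>U. openin X U \<longrightarrow> openin Y (s U)) \<and>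
        (\<forall>U. openin X U \<longrightarrow> s U \<subseteq> \<Union>{F K | K. compactin X K \<and> K \<subseteq> U}) \<and>
        s (topspace X) = topspace Y \<and>
        (\<forall>U V. openin X U \<and> openin X V \<and> U \<subseteq> V \<longrightarrow> s U \<subseteq> s V) \<and>
        (\<forall>U y \<W>. openin X U \<and> y \<in> s U \<and> (\<forall>W\<in>\<W>. openin X W) \<and>
            \<Union>{K. compactin X K \<and> y \<in> F K \<and> K \<subseteq> U} \<subseteq> \<Union>\<W>
          \<longrightarrow> (\<exists>\<E>. finite \<E> \<and> \<E> \<subseteq> \<W> \<and> y \<in> s (\<Union>\<E>))))"

definition monotone_set_tri_quotient ::
  "'a topology \<Rightarrow> 'b topology \<Rightarrow> ('a set \<Rightarrow> 'b set) \<Rightarrow> bool" where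
  "monotone_set_tri_quotient X Y F \<longleftrightarrow> monotone_cpt X F \<and> set_tri_quotient X Y F"

end

theory Submission
  imports Defs
begin

text \<open>The witness for (str4) is the largest open set whose countable compact subsets all lift
  into U: hypothesis \<open>(3)\<^sub>c\<close> shrinks U to a finite union from the cover while keeping
  a neighbourhood of y, and monotonicity shows that the compacta K \<subseteq> U with y \<in> F K already
  exhaust U, so a cover of their union is a cover of U.\<close>

definition lifts_countable_compacta ::
  "'a topology \<Rightarrow> 'b topology \<Rightarrow> ('a set \<Rightarrow> 'b set) \<Rightarrow> 'a set \<Rightarrow> 'b set \<Rightarrow> bool" where
  "lifts_countable_compacta X Y F U V \<longleftrightarrow>
     (\<forall>L. countable L \<and> compactin Y L \<and> L \<subseteq> V \<longrightarrow> (\<exists>K. compactin X K \<and> K \<subseteq> U \<and> L \<subseteq> F K))"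

definition lift_region ::
  "'a topology \<Rightarrow> 'b topology \<Rightarrow> ('a set \<Rightarrow> 'b set) \<Rightarrow> 'a set \<Rightarrow> 'b set" where
  "lift_region X Y F U = \<Union>{V. openin Y V \<and> lifts_countable_compacta X Y F U V}"

lemma lifts_countable_compacta_mono:
  "lifts_countable_compacta X Y F U V \<Longrightarrow> U \<subseteq> U' \<Longrightarrow> lifts_countable_compacta X Y F U' V"
  unfolding lifts_countable_compacta_def by (meson order_trans)

lemma openin_lift_region: "openin Y (lift_region X Y F U)"
  unfolding lift_region_def by (rule openin_Union) auto

lemma lift_region_mono: "U \<subseteq> U' \<Longrightarrow> lift_region X Y F U \<subseteq> lift_region X Y F U'"
  unfolding lift_region_def by (intro Union_mono) (auto intro: lifts_countable_compacta_mono)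

lemma lift_region_memE:
  assumes "y \<in> lift_region X Y F U"
  obtains K where "compactin X K" "K \<subseteq> U" "y \<in> F K"
proof -
  from assms obtain V where V: "openin Y V" "lifts_countable_compacta X Y F U V" "y \<in> V"
    unfolding lift_region_def by auto
  have "compactin Y {y}"
    using openin_subset[OF V(1)] V(3) by auto
  moreover have "countable {y}"
    by simp
  ultimately obtain K where "compactin X K" "K \<subseteq> U" "{y} \<subseteq> F K"
    using V(2,3) unfolding lifts_countable_compacta_def by blast
  with that show thesis
    by blast
qed

lemma lift_region_subset_images:
  "lift_region X Y F U \<subseteq> \<Union>{F K | K. compactin X K \<and> K \<subseteq> U}"
proof
  fix y
  assume "y \<in> lift_region X Y F U"
  then obtain K where "compactin X K" "K \<subseteq> U" "y \<in> F K"
    by (rule lift_region_memE)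
  then show "y \<in> \<Union>{F K | K. compactin X K \<and> K \<subseteq> U}"
    by blast
qed

lemma lift_region_topspace:
  assumes "\<And>L. \<lbrakk>countable L; compactin Y L\<rbrakk> \<Longrightarrow> \<exists>K. compactin X K \<and> L \<subseteq> F K"
  shows "lift_region X Y F (topspace X) = topspace Y"
proof
  show "lift_region X Y F (topspace X) \<subseteq> topspace Y"
    by (rule openin_subset[OF openin_lift_region])
  have "lifts_countable_compacta X Y F (topspace X) (topspace Y)"
    unfolding lifts_countable_compacta_def
  proof (intro allI impI)
    fix L
    assume "countable L \<and> compactin Y L \<and> L \<subseteq> topspace Y"
    then obtain K where "compactin X K" "L \<subseteq> F K"
      using assms by blast
    then show "\<exists>K. compactin X K \<and> K \<subseteq> topspace X \<and> L \<subseteq> F K"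
      using compactin_subset_topspace by blast
  qed
  then show "topspace Y \<subseteq> lift_region X Y F (topspace X)"
    unfolding lift_region_def by auto
qed

lemma Union_compacta_through_point:
  assumes "monotone_cpt X F" and "U \<subseteq> topspace X"
    and "compactin X K\<^sub>0" "K\<^sub>0 \<subseteq> U" "y \<in> F K\<^sub>0"
  shows "\<Union>{K. compactin X K \<and> y \<in> F K \<and> K \<subseteq> U} = U"
proof (intro equalityI subsetI)
  fix x assume "x \<in> U"
  then have "compactin X (insert x K\<^sub>0)"
    using assms(2,3) compactin_Un[of X "{x}" K\<^sub>0] by auto
  moreover have "y \<in> F (insert x K\<^sub>0)"
    using assms(1,3,5) calculation unfolding monotone_cpt_def by blast
  ultimately show "x \<in> \<Union>{K. compactin X K \<and> y \<in> F K \<and> K \<subseteq> U}"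
    using \<open>x \<in> U\<close> assms(4) by blast
qed blast

lemma lift_region_finite_subcover:
  assumes mono: "monotone_cpt X F" and U: "U \<subseteq> topspace X" and y: "y \<in> lift_region X Y F U"
    and cover: "\<Union>{K. compactin X K \<and> y \<in> F K \<and> K \<subseteq> U} \<subseteq> \<Union>\<W>"
    and shrink: "\<And>V. \<lbrakk>U \<noteq> {}; openin Y V; y \<in> V; lifts_countable_compacta X Y F U V;
        U \<subseteq> \<Union>\<W>\<rbrakk> \<Longrightarrow> \<exists>\<E> V'. finite \<E> \<and> \<E> \<subseteq> \<W> \<and> openin Y V' \<and> y \<in> V' \<and>
          lifts_countable_compacta X Y F (\<Union>\<E>) V'"
  shows "\<exists>\<E>. finite \<E> \<and> \<E> \<subseteq> \<W> \<and> y \<in> lift_region X Y F (\<Union>\<E>)"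
proof (cases "U = {}")
  case True
  with y have "y \<in> lift_region X Y F (\<Union>{})"
    by simp
  then show ?thesis
    by (intro exI[of _ "{}"]) simp
next
  case False
  obtain K\<^sub>0 where "compactin X K\<^sub>0" "K\<^sub>0 \<subseteq> U" "y \<in> F K\<^sub>0"
    using y by (rule lift_region_memE)
  then have U_cover: "U \<subseteq> \<Union>\<W>"
    using cover Union_compacta_through_point[OF mono U] by simp
  obtain V where V: "openin Y V" "y \<in> V" "lifts_countable_compacta X Y F U V"
    using y unfolding lift_region_def by auto
  obtain \<E> V' where \<E>: "finite \<E>" "\<E> \<subseteq> \<W>"
    and V': "openin Y V'" "y \<in> V'" "lifts_countable_compacta X Y F (\<Union>\<E>) V'"
    using shrink[OF False V U_cover] by (elim exE conjE)
  from V' have "y \<in> lift_region X Y F (\<Union>\<E>)"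
    unfolding lift_region_def by blast
  with \<E> show ?thesis
    by blast
qed

theorem proposition2p4:
  fixes X :: "'a topology" and Y :: "'b topology" and F :: "'a set \<Rightarrow> 'b set"
  assumes "completely_regular_space X" and "completely_regular_space Y"
    and maps: "\<And>K. compactin X K \<Longrightarrow> compactin Y (F K)"
    and h1: "\<And>K L. \<lbrakk>compactin X K; compactin X L; K \<subseteq> L\<rbrakk> \<Longrightarrow> F K \<subseteq> F L"
    and h2: "\<And>L. \<lbrakk>countable L; compactin Y L\<rbrakk> \<Longrightarrow> \<exists>K. compactin X K \<and> L \<subseteq> F K"
    and h3: "\<And>U V. \<lbrakk>openin X U; U \<noteq> {}; openin Y V; V \<noteq> {};
        \<forall>L. countable L \<and> compactin Y L \<and> L \<subseteq> V \<longrightarrow>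
            (\<exists>K. compactin X K \<and> K \<subseteq> U \<and> L \<subseteq> F K)\<rbrakk> \<Longrightarrow>
      \<forall>\<W> y. (\<forall>W\<in>\<W>. openin X W) \<and> U \<subseteq> \<Union>\<W> \<and> y \<in> V \<longrightarrow>
        (\<exists>\<E> Vy. finite \<E> \<and> \<E> \<subseteq> \<W> \<and> openin Y Vy \<and> y \<in> Vy \<and>
           (\<forall>L. countable L \<and> compactin Y L \<and> L \<subseteq> Vy \<longrightarrow>
              (\<exists>K. compactin X K \<and> K \<subseteq> \<Union>\<E> \<and> L \<subseteq> F K)))"
  shows "monotone_set_tri_quotient X Y F"
proof -
  have mono: "monotone_cpt X F"
    unfolding monotone_cpt_def using h1 by blast
  have shrink: "\<exists>\<E> V'. finite \<E> \<and> \<E> \<subseteq> \<W> \<and> openin Y V' \<and> y \<in> V' \<and>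
      lifts_countable_compacta X Y F (\<Union>\<E>) V'"
    if "openin X U" "U \<noteq> {}" "openin Y V" "y \<in> V" "lifts_countable_compacta X Y F U V"
      "\<forall>W\<in>\<W>. openin X W" "U \<subseteq> \<Union>\<W>" for U V y \<W>
  proof -
    have "V \<noteq> {}"
      using that(4) by blast
    from h3[OF that(1-3) this that(5)[unfolded lifts_countable_compacta_def], rule_format, of \<W> y]
    show ?thesis
      using that(4,6,7) unfolding lifts_countable_compacta_def by blast
  qed
  have "set_tri_quotient X Y F"
    unfolding set_tri_quotient_def
  proof (intro exI[of _ "lift_region X Y F"] conjI allI impI)
    fix U y \<W>
    assume "openin X U \<and> y \<in> lift_region X Y F U \<and> (\<forall>W\<in>\<W>. openin X W) \<and>
      \<Union>{K. compactin X K \<and> y \<in> F K \<and> K \<subseteq> U} \<subseteq> \<Union>\<W>"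
    then have U: "openin X U" and y: "y \<in> lift_region X Y F U" and W: "\<forall>W\<in>\<W>. openin X W"
      and cover: "\<Union>{K. compactin X K \<and> y \<in> F K \<and> K \<subseteq> U} \<subseteq> \<Union>\<W>"
      by auto
    show "\<exists>\<E>. finite \<E> \<and> \<E> \<subseteq> \<W> \<and> y \<in> lift_region X Y F (\<Union>\<E>)"
      by (rule lift_region_finite_subcover[OF mono openin_subset[OF U] y cover])
        (rule shrink[OF U _ _ _ _ W]; assumption)
  next
    show "lift_region X Y F (topspace X) = topspace Y"
      using h2 by (rule lift_region_topspace)
  qed (simp_all add: openin_lift_region lift_region_subset_images lift_region_mono)
  with mono show ?thesis
    unfolding monotone_set_tri_quotient_def ..
qed

end
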